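(* Let $R$ be a local ring and $s\in R$ a central element with $s\in J(R)$. Let $A\in M_2(R;s)$ be such that neither $A$ nor $I_2-A$ is a unit of $M_2(R;s)$. Then $A$ is similar to $\left[\begin{smallmatrix} u&1\\ v&w\end{smallmatrix}\right]$ or to $\left[\begin{smallmatrix} w&1\\ v&u\end{smallmatrix}\right]$ for some $u\in 1+J(R)$, $v\in U(R)$, $w\in J(R)$.
   Context: All rings are associative with identity. A ring $R$ is local if $R/J(R)$ is a division ring, where $J(R)$ is the Jacobson radical; $U(R)$ is the group of units. For a ring $R$ and a central element $s\in R$, $M_2(R;s)$ denotes the ring whose elements are the $2\times 2$ arrays $\left[\begin{smallmatrix} a&b\\ c&d\end{smallmatrix}\right]$ with $a,b,c,d\in R$, with componentwise addition and multiplication $\left[\begin{smallmatrix} a&b\\ c&d\end{smallmatrix}\right]\left[\begin{smallmatrix} a'&b'\\ c'&d'\end{smallmatrix}\right]=\left[\begin{smallmatrix} aa'+s^2bc'&ab'+bd'\\ ca'+dc'&s^2cb'+dd'\end{smallmatrix}\right]$, with identity $I_2$. Two elements $A,B\in M_2(R;s)$ are similar if $B=P^{-1}AP$ for some unit $P$ of $M_2(R;s)$. *)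

theory Defs
  imports Main
begin

definition left_ideal :: "'a::ring_1 set \<Rightarrow> bool" where
  "left_ideal L \<longleftrightarrow> 0 \<in> L \<and> (\<forall>x\<in>L. \<forall>y\<in>L. x + y \<in> L) \<and> (\<forall>r. \<forall>x\<in>L. r * x \<in> L)"

definition maximal_left_ideal :: "'a::ring_1 set \<Rightarrow> bool" where
  "maximal_left_ideal L \<longleftrightarrow> left_ideal L \<and> L \<noteq> UNIV \<and>
     (\<forall>L'. left_ideal L' \<and> L \<subseteq> L' \<longrightarrow> L' = L \<or> L' = UNIV)"

definition jacobson :: "'a::ring_1 set" where
  "jacobson = \<Inter> {L. maximal_left_ideal L}"

definition is_unit_r :: "'a::ring_1 \<Rightarrow> bool" where
  "is_unit_r x \<longleftrightarrow> (\<exists>y. x * y = 1 \<and> y * x = 1)"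

text \<open>R is local iff R/J(R) is a division ring: the quotient is nonzero and every
nonzero class is invertible (unfolded without forming the quotient).\<close>
definition local_ring :: "'a::ring_1 itself \<Rightarrow> bool" where
  "local_ring _ \<longleftrightarrow> (jacobson :: 'a set) \<noteq> UNIV \<and>
     (\<forall>x::'a. x \<notin> jacobson \<longrightarrow> (\<exists>y. x * y - 1 \<in> jacobson \<and> y * x - 1 \<in> jacobson))"

definition central :: "'a::ring_1 \<Rightarrow> bool" where
  "central s \<longleftrightarrow> (\<forall>x. s * x = x * s)"

text \<open>The ring M_2(R;s): Mat2 a b c d stands for the array [a b; c d].\<close>
datatype 'a mat2 = Mat2 'a 'a 'a 'a

fun mmul :: "'a::ring_1 \<Rightarrow> 'a mat2 \<Rightarrow> 'a mat2 \<Rightarrow> 'a mat2" where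
  "mmul s (Mat2 a b c d) (Mat2 a' b' c' d') =
     Mat2 (a*a' + s^2*b*c') (a*b' + b*d') (c*a' + d*c') (s^2*c*b' + d*d')"

definition mone :: "'a::ring_1 mat2" where
  "mone = Mat2 1 0 0 1"

fun msub :: "'a::ring_1 mat2 \<Rightarrow> 'a mat2 \<Rightarrow> 'a mat2" where
  "msub (Mat2 a b c d) (Mat2 a' b' c' d') = Mat2 (a-a') (b-b') (c-c') (d-d')"

definition is_unit_m :: "'a::ring_1 \<Rightarrow> 'a mat2 \<Rightarrow> bool" where
  "is_unit_m s P \<longleftrightarrow> (\<exists>Q. mmul s P Q = mone \<and> mmul s Q P = mone)"

definition similar_m :: "'a::ring_1 \<Rightarrow> 'a mat2 \<Rightarrow> 'a mat2 \<Rightarrow> bool" where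
  "similar_m s A B \<longleftrightarrow> (\<exists>P Q. mmul s P Q = mone \<and> mmul s Q P = mone \<and>
      B = mmul s (mmul s Q A) P)"

end

theory Submission
  imports Defs
begin

(* A 2x2 array over R is a unit of M_2(R;s) as soon as both diagonal entries are units:
   the correction s^2 c a^{-1} b of the Schur complement lies in J because s does.  Hence the
   non-units A and I - A each have a diagonal entry in J = the non-units of R, and as no element
   lies in J together with 1 minus it, the diagonal of A is (0,1) or (1,0) modulo J; in particular
   a - d is a unit.  Conjugating by the elementary matrices [1 0; 1 1] and [1 1; 0 1] alters the
   diagonal only by multiples of s^2 and adds +-(a - d) to an off-diagonal entry, which makes
   both off-diagonal entries units; a diagonal conjugation finally turns the (1,2)-entry into 1. *)

lemma left_ideal_jacobson: "left_ideal (jacobson :: 'a::ring_1 set)"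
  unfolding left_ideal_def jacobson_def maximal_left_ideal_def by auto

lemma zero_in_jacobson: "0 \<in> (jacobson :: 'a::ring_1 set)"
  using left_ideal_jacobson unfolding left_ideal_def by blast

lemma jacobson_add: "x \<in> jacobson \<Longrightarrow> y \<in> jacobson \<Longrightarrow> x + y \<in> (jacobson :: 'a::ring_1 set)"
  using left_ideal_jacobson unfolding left_ideal_def by blast

lemma jacobson_mult_left: "x \<in> jacobson \<Longrightarrow> r * x \<in> (jacobson :: 'a::ring_1 set)"
  using left_ideal_jacobson unfolding left_ideal_def by blast

lemma jacobson_uminus: "x \<in> jacobson \<Longrightarrow> - x \<in> (jacobson :: 'a::ring_1 set)"
  using jacobson_mult_left[of x "-1"] by simp

lemma jacobson_diff: "x \<in> jacobson \<Longrightarrow> y \<in> jacobson \<Longrightarrow> x - y \<in> (jacobson :: 'a::ring_1 set)"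
  using jacobson_add[of x "- y"] jacobson_uminus[of y] by simp

lemma jacobson_iff_of_diff:
  assumes "x - y \<in> (jacobson :: 'a::ring_1 set)"
  shows "x \<in> jacobson \<longleftrightarrow> y \<in> jacobson"
  using jacobson_add[OF assms, of y] jacobson_diff[OF _ assms, of x] by auto

lemma jacobson_diff_trans:
  "x - y \<in> jacobson \<Longrightarrow> y - z \<in> jacobson \<Longrightarrow> x - z \<in> (jacobson :: 'a::ring_1 set)"
  using jacobson_add[of "x - y" "y - z"] by simp

lemma left_ideal_eq_UNIV_if_one: "left_ideal L \<Longrightarrow> 1 \<in> L \<Longrightarrow> L = UNIV"
  unfolding left_ideal_def by (metis UNIV_eq_I mult.right_neutral)

lemma ex_maximal_left_ideal_containing:
  fixes a :: "'a::ring_1"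
  assumes "\<nexists>y. y * a = 1"
  shows "\<exists>M. maximal_left_ideal M \<and> a \<in> M"
proof -
  define S where "S = {L. left_ideal L \<and> a \<in> L \<and> (1::'a) \<notin> L}"
  have "range (\<lambda>r. r * a) \<in> S"
    unfolding S_def left_ideal_def using assms
    by (auto simp: distrib_right[symmetric] mult.assoc[symmetric] image_iff intro: exI[of _ 1])
      (metis mult_zero_left)
  hence "S \<noteq> {}" by blast
  moreover have "\<Union>C \<in> S" if "C \<noteq> {}" "subset.chain S C" for C
  proof -
    have CS: "C \<subseteq> S" and lin: "\<forall>X\<in>C. \<forall>Y\<in>C. X \<subseteq> Y \<or> Y \<subseteq> X"
      using that(2) by (auto simp: subset_chain_def)
    have "x + y \<in> \<Union>C" if xy: "x \<in> \<Union>C" "y \<in> \<Union>C" for x y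
    proof -
      obtain X Y where XY: "X \<in> C" "Y \<in> C" "x \<in> X" "y \<in> Y" using xy by blast
      with lin have "X \<subseteq> Y \<or> Y \<subseteq> X" by blast
      with XY CS show ?thesis unfolding S_def left_ideal_def by blast
    qed
    with that(1) CS show ?thesis unfolding S_def left_ideal_def by blast
  qed
  ultimately obtain M where M: "M \<in> S" "\<forall>X\<in>S. M \<subseteq> X \<longrightarrow> X = M"
    using subset_Zorn_nonempty[of S] by blast
  have "maximal_left_ideal M"
    unfolding maximal_left_ideal_def
  proof (intro conjI allI impI)
    show "left_ideal M" "M \<noteq> UNIV" using M unfolding S_def by auto
    fix L assume L: "left_ideal L \<and> M \<subseteq> L"
    show "L = M \<or> L = UNIV"
    proof (cases "1 \<in> L")
      case True
      then show ?thesis using L left_ideal_eq_UNIV_if_one by blast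
    next
      case False
      then have "L \<in> S" using L M(1) unfolding S_def by blast
      then show ?thesis using M L by blast
    qed
  qed
  then show ?thesis using M(1) unfolding S_def by blast
qed

lemma left_invertible_one_plus_jacobson:
  fixes j :: "'a::ring_1"
  assumes "j \<in> jacobson"
  shows "\<exists>y. y * (1 + j) = 1"
proof (rule ccontr)
  assume "\<not> ?thesis"
  then obtain M where M: "maximal_left_ideal M" "1 + j \<in> M"
    using ex_maximal_left_ideal_containing by blast
  have ideal: "left_ideal M" using M(1) unfolding maximal_left_ideal_def by blast
  have "j \<in> M" using M(1) assms unfolding jacobson_def by blast
  then have "1 + j + (-1) * j \<in> M" using ideal M(2) unfolding left_ideal_def by blast
  then have "M = UNIV" using ideal left_ideal_eq_UNIV_if_one by simp
  then show False using M(1) unfolding maximal_left_ideal_def by blast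
qed

lemma is_unit_r_if_left_right_inverse:
  fixes x :: "'a::ring_1"
  assumes "l * x = 1" "x * r = 1"
  shows "is_unit_r x"
proof -
  have "l = r" by (metis assms mult.assoc mult.left_neutral mult.right_neutral)
  then show ?thesis using assms unfolding is_unit_r_def by blast
qed

lemma is_unit_r_mult: "is_unit_r x \<Longrightarrow> is_unit_r y \<Longrightarrow> is_unit_r (x * (y::'a::ring_1))"
  unfolding is_unit_r_def
proof (elim exE conjE)
  fix x' y' assume "x * x' = 1" "x' * x = 1" "y * y' = 1" "y' * y = 1"
  then show "\<exists>z. x * y * z = 1 \<and> z * (x * y) = 1"
    by (intro exI[of _ "y' * x'"]) (simp add: mult.assoc flip: mult.assoc[of y] mult.assoc[of x'])
qed

lemma is_unit_r_one_plus_jacobson: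
  fixes j :: "'a::ring_1"
  assumes "j \<in> jacobson"
  shows "is_unit_r (1 + j)"
proof -
  obtain y where y: "y * (1 + j) = 1" using left_invertible_one_plus_jacobson[OF assms] by blast
  have "y = 1 + (- y) * j" using y by (simp add: algebra_simps)
  moreover have "(- y) * j \<in> jacobson" using jacobson_mult_left[OF assms] .
  ultimately obtain z where z: "z * y = 1" using left_invertible_one_plus_jacobson by metis
  have "z = 1 + j" by (metis y z mult.assoc mult.left_neutral mult.right_neutral)
  then show ?thesis using y z is_unit_r_if_left_right_inverse by blast
qed

lemma local_ring_one_notin_jacobson:
  assumes "local_ring TYPE('a::ring_1)"
  shows "(1::'a) \<notin> jacobson"
proof
  assume "(1::'a) \<in> jacobson"
  then have "r \<in> (jacobson :: 'a set)" for r using jacobson_mult_left[of 1 r] by simp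
  then show False using assms unfolding local_ring_def by blast
qed

lemma local_ring_one_minus_notin_jacobson:
  assumes "local_ring TYPE('a::ring_1)" "(x::'a) \<in> jacobson"
  shows "1 - x \<notin> jacobson"
  using jacobson_add[OF assms(2), of "1 - x"] local_ring_one_notin_jacobson[OF assms(1)] by auto

lemma local_ring_is_unit_r_iff:
  fixes x :: "'a::ring_1"
  assumes "local_ring TYPE('a)"
  shows "is_unit_r x \<longleftrightarrow> x \<notin> jacobson"
proof
  assume "is_unit_r x"
  then obtain y where "y * x = 1" unfolding is_unit_r_def by blast
  then show "x \<notin> jacobson"
    using jacobson_mult_left[of x y] local_ring_one_notin_jacobson[OF assms] by auto
next
  assume "x \<notin> jacobson"
  then obtain y where y: "x * y - 1 \<in> jacobson" "y * x - 1 \<in> jacobson"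
    using assms unfolding local_ring_def by blast
  obtain r where "x * y * r = 1"
    using is_unit_r_one_plus_jacobson[OF y(1)] unfolding is_unit_r_def by auto
  moreover obtain l where "l * (y * x) = 1"
    using is_unit_r_one_plus_jacobson[OF y(2)] unfolding is_unit_r_def by auto
  ultimately show "is_unit_r x"
    using is_unit_r_if_left_right_inverse[of "l * y" x "y * r"] by (simp add: mult.assoc)
qed

lemma local_ring_jacobson_conj:
  fixes x :: "'a::ring_1"
  assumes L: "local_ring TYPE('a)" and b: "b * b' = 1" "b' * b = 1" and x: "x \<in> jacobson"
  shows "b * x * b' \<in> jacobson"
proof (rule ccontr)
  assume "b * x * b' \<notin> jacobson"
  then have "is_unit_r (b * x * b')" using local_ring_is_unit_r_iff[OF L] by blast
  moreover have "is_unit_r b" "is_unit_r b'" using b unfolding is_unit_r_def by blast+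
  ultimately have "is_unit_r (b' * (b * x * b') * b)" using is_unit_r_mult by blast
  moreover have "b' * (b * x * b') * b = (b' * b) * x * (b' * b)"
    by (simp add: mult.assoc)
  ultimately show False using b x local_ring_is_unit_r_iff[OF L] by simp
qed

lemma central_power2_commute: "central s \<Longrightarrow> x * s^2 = s^2 * (x::'a::ring_1)"
  unfolding central_def by (metis mult.assoc power2_eq_square)

lemma central_jacobson_power2_mult:
  fixes s :: "'a::ring_1"
  assumes "central s" "s \<in> jacobson"
  shows "s^2 * x \<in> jacobson"
proof -
  have "s^2 * x = (x * s) * s"
    using central_power2_commute[OF assms(1)] by (simp add: power2_eq_square mult.assoc)
  then show ?thesis using jacobson_mult_left[OF assms(2), of "x * s"] by simp
qed

lemma mmul_assoc:
  assumes "central s"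
  shows "mmul s (mmul s A B) C = mmul s A (mmul s B C)"
proof -
  have "x * (s^2 * y) = s^2 * (x * y)" for x y
    by (metis central_power2_commute[OF assms] mult.assoc)
  then show ?thesis by (cases A; cases B; cases C) (simp add: algebra_simps)
qed

lemma mmul_mone_left [simp]: "mmul s mone A = A"
  by (cases A) (simp add: mone_def)

lemma mmul_mone_right [simp]: "mmul s A mone = A"
  by (cases A) (simp add: mone_def)

lemma mmul_inverse_mmul:
  assumes "central s" "mmul s P Q = mone" "mmul s P' Q' = mone"
  shows "mmul s (mmul s P P') (mmul s Q' Q) = mone"
  using assms by (simp add: mmul_assoc flip: mmul_assoc[of s P'])

lemma is_unit_m_mmul:
  assumes "central s" "is_unit_m s P" "is_unit_m s P'"
  shows "is_unit_m s (mmul s P P')"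
  using assms mmul_inverse_mmul[OF assms(1)] unfolding is_unit_m_def by metis

lemma similar_m_refl: "similar_m s A A"
  unfolding similar_m_def by (rule exI[of _ mone], rule exI[of _ mone]) simp

lemma similar_m_trans:
  assumes c: "central s" and "similar_m s A B" "similar_m s B C"
  shows "similar_m s A C"
proof -
  obtain P Q where PQ: "mmul s P Q = mone" "mmul s Q P = mone" "B = mmul s (mmul s Q A) P"
    using assms(2) unfolding similar_m_def by blast
  obtain P' Q' where PQ': "mmul s P' Q' = mone" "mmul s Q' P' = mone" "C = mmul s (mmul s Q' B) P'"
    using assms(3) unfolding similar_m_def by blast
  have "C = mmul s (mmul s (mmul s Q' Q) A) (mmul s P P')"
    by (simp only: PQ'(3) PQ(3) mmul_assoc[OF c])
  then show ?thesis
    unfolding similar_m_def using mmul_inverse_mmul[OF c] PQ PQ' by blast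
qed

lemma is_unit_m_if_diagonal_notin_jacobson:
  fixes a :: "'a::ring_1"
  assumes L: "local_ring TYPE('a)" and c: "central s" and sJ: "s \<in> jacobson"
    and a: "a \<notin> jacobson" and d: "d \<notin> jacobson"
  shows "is_unit_m s (Mat2 a b cc d)"
proof -
  obtain ai where ai: "a * ai = 1" "ai * a = 1"
    using a local_ring_is_unit_r_iff[OF L] unfolding is_unit_r_def by blast
  define \<delta> where "\<delta> = d - s^2 * (cc * ai * b)"
  have "\<delta> \<notin> jacobson"
    using d jacobson_iff_of_diff[of d \<delta>] central_jacobson_power2_mult[OF c sJ]
    unfolding \<delta>_def by auto
  then obtain di where di: "\<delta> * di = 1" "di * \<delta> = 1"
    using local_ring_is_unit_r_iff[OF L] unfolding is_unit_r_def by blast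
  have ai': "a * (ai * x) = x" "x * (ai * a) = x" for x
    using ai by (simp_all add: mult.assoc[symmetric])
  have "Mat2 a b cc d = mmul s (mmul s (Mat2 1 0 (cc*ai) 1) (Mat2 a 0 0 \<delta>)) (Mat2 1 (ai*b) 0 1)"
    unfolding \<delta>_def by (simp add: ai' mult.assoc)
  moreover have "is_unit_m s (Mat2 1 0 (cc*ai) 1)" unfolding is_unit_m_def
    by (rule exI[of _ "Mat2 1 0 (-(cc*ai)) 1"]) (simp add: mone_def)
  moreover have "is_unit_m s (Mat2 a 0 0 \<delta>)" unfolding is_unit_m_def
    by (rule exI[of _ "Mat2 ai 0 0 di"]) (simp add: mone_def ai di)
  moreover have "is_unit_m s (Mat2 1 (ai*b) 0 1)" unfolding is_unit_m_def
    by (rule exI[of _ "Mat2 1 (-(ai*b)) 0 1"]) (simp add: mone_def)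
  ultimately show ?thesis using is_unit_m_mmul[OF c] by metis
qed


lemma similar_m_make_lower_left_notin_jacobson:
  fixes a :: "'a::ring_1"
  assumes c: "central s" and sJ: "s \<in> jacobson" and ad: "a - d \<notin> jacobson"
  shows "\<exists>a' c' d'. similar_m s (Mat2 a b cc d) (Mat2 a' b c' d') \<and>
           a' - a \<in> jacobson \<and> d' - d \<in> jacobson \<and> c' \<notin> jacobson"
proof (cases "cc \<in> jacobson")
  case False
  then show ?thesis using similar_m_refl zero_in_jacobson by force
next
  case True
  let ?c' = "cc - a + d - s^2 * b"
  have "similar_m s (Mat2 a b cc d) (Mat2 (a + s^2 * b) b ?c' (d - s^2 * b))"
    unfolding similar_m_def
    by (rule exI[of _ "Mat2 1 0 1 1"], rule exI[of _ "Mat2 1 0 (-1) 1"])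
      (simp add: mone_def algebra_simps)
  moreover have "?c' \<notin> jacobson"
  proof -
    have "?c' - (d - a) \<in> jacobson"
      using jacobson_diff[OF True central_jacobson_power2_mult[OF c sJ]] by (simp add: algebra_simps)
    moreover have "d - a \<notin> jacobson" using ad jacobson_uminus[of "d - a"] by auto
    ultimately show ?thesis using jacobson_iff_of_diff by blast
  qed
  ultimately show ?thesis
    using central_jacobson_power2_mult[OF c sJ] jacobson_uminus by fastforce
qed

lemma similar_m_make_upper_right_notin_jacobson:
  fixes a :: "'a::ring_1"
  assumes c: "central s" and sJ: "s \<in> jacobson" and ad: "a - d \<notin> jacobson"
  shows "\<exists>a' b' d'. similar_m s (Mat2 a b cc d) (Mat2 a' b' cc d') \<and>
           a' - a \<in> jacobson \<and> d' - d \<in> jacobson \<and> b' \<notin> jacobson"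
proof (cases "b \<in> jacobson")
  case False
  then show ?thesis using similar_m_refl zero_in_jacobson by force
next
  case True
  let ?b' = "a - s^2 * cc + b - d"
  have "similar_m s (Mat2 a b cc d) (Mat2 (a - s^2 * cc) ?b' cc (s^2 * cc + d))"
    unfolding similar_m_def
    by (rule exI[of _ "Mat2 1 1 0 1"], rule exI[of _ "Mat2 1 (-1) 0 1"])
      (simp add: mone_def algebra_simps)
  moreover have "?b' \<notin> jacobson"
  proof -
    have "?b' - (a - d) \<in> jacobson"
      using jacobson_diff[OF True central_jacobson_power2_mult[OF c sJ]] by (simp add: algebra_simps)
    then show ?thesis using ad jacobson_iff_of_diff by blast
  qed
  ultimately show ?thesis
    using central_jacobson_power2_mult[OF c sJ] jacobson_uminus by fastforce
qed

lemma similar_m_make_off_diagonal_notin_jacobson: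
  fixes a :: "'a::ring_1"
  assumes c: "central s" and sJ: "s \<in> jacobson" and ad: "a - d \<notin> jacobson"
  shows "\<exists>a' b' c' d'. similar_m s (Mat2 a b cc d) (Mat2 a' b' c' d') \<and>
           a' - a \<in> jacobson \<and> d' - d \<in> jacobson \<and> b' \<notin> jacobson \<and> c' \<notin> jacobson"
proof -
  obtain a1 c1 d1 where 1: "similar_m s (Mat2 a b cc d) (Mat2 a1 b c1 d1)"
    "a1 - a \<in> jacobson" "d1 - d \<in> jacobson" "c1 \<notin> jacobson"
    using similar_m_make_lower_left_notin_jacobson[OF c sJ ad] by blast
  have "(a1 - d1) - (a - d) \<in> jacobson"
    using jacobson_diff[OF 1(2,3)] by (simp add: algebra_simps)
  then have "a1 - d1 \<notin> jacobson" using ad jacobson_iff_of_diff by blast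
  then obtain a2 b2 d2 where 2: "similar_m s (Mat2 a1 b c1 d1) (Mat2 a2 b2 c1 d2)"
    "a2 - a1 \<in> jacobson" "d2 - d1 \<in> jacobson" "b2 \<notin> jacobson"
    using similar_m_make_upper_right_notin_jacobson[OF c sJ] by blast
  show ?thesis
    using similar_m_trans[OF c 1(1) 2(1)] jacobson_diff_trans 1 2 by blast
qed

lemma similar_m_upper_right_one:
  fixes a :: "'a::ring_1"
  assumes "b * b' = 1" "b' * b = 1"
  shows "similar_m s (Mat2 a b cc d) (Mat2 a 1 (b * cc) (b * d * b'))"
  unfolding similar_m_def
  by (rule exI[of _ "Mat2 1 0 0 b'"], rule exI[of _ "Mat2 1 0 0 b"])
    (use assms in \<open>simp add: mone_def mult.assoc\<close>)

lemma local_ring_diagonal_of_non_unit_m: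
  fixes a :: "'a::ring_1"
  assumes L: "local_ring TYPE('a)" and c: "central s" and sJ: "s \<in> jacobson"
    and A: "\<not> is_unit_m s (Mat2 a b cc d)" and IA: "\<not> is_unit_m s (msub mone (Mat2 a b cc d))"
  shows "(a \<in> jacobson \<and> d - 1 \<in> jacobson) \<or> (d \<in> jacobson \<and> a - 1 \<in> jacobson)"
proof -
  have "a \<in> jacobson \<or> d \<in> jacobson"
    using A is_unit_m_if_diagonal_notin_jacobson[OF L c sJ] by blast
  moreover have "1 - a \<in> jacobson \<or> 1 - d \<in> jacobson"
    using IA is_unit_m_if_diagonal_notin_jacobson[OF L c sJ, of "1 - a" "1 - d" "- b" "- cc"]
    by (auto simp: mone_def)
  moreover have "x - 1 \<in> jacobson" if "1 - x \<in> jacobson" for x :: 'a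
    using jacobson_uminus[OF that] by simp
  ultimately show ?thesis using local_ring_one_minus_notin_jacobson[OF L] by blast
qed

lemma local_ring_diff_notin_jacobson:
  fixes x :: "'a::ring_1"
  assumes L: "local_ring TYPE('a)" and "x \<in> jacobson" "y - 1 \<in> jacobson"
  shows "x - y \<notin> jacobson"
proof
  assume "x - y \<in> jacobson"
  then have "y \<in> jacobson" using assms(2) jacobson_iff_of_diff by blast
  then show False
    using assms(3) jacobson_iff_of_diff local_ring_one_notin_jacobson[OF L] by blast
qed

theorem lemma2p15:
  fixes s :: "'a::ring_1" and A :: "'a mat2"
  assumes "local_ring TYPE('a)"
    and "central s"
    and "s \<in> jacobson"
    and "\<not> is_unit_m s A"
    and "\<not> is_unit_m s (msub mone A)"
  shows "\<exists>u v w. u - 1 \<in> jacobson \<and> is_unit_r v \<and> w \<in> jacobson \<and>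
           (similar_m s A (Mat2 u 1 v w) \<or> similar_m s A (Mat2 w 1 v u))"
proof -
  note L = assms(1) and c = assms(2) and sJ = assms(3)
  obtain a b cc d where A: "A = Mat2 a b cc d" by (cases A)
  have diag: "(a \<in> jacobson \<and> d - 1 \<in> jacobson) \<or> (d \<in> jacobson \<and> a - 1 \<in> jacobson)"
    using local_ring_diagonal_of_non_unit_m[OF L c sJ] assms(4,5) A by blast
  then have "a - d \<notin> jacobson"
    using local_ring_diff_notin_jacobson[OF L] jacobson_uminus by fastforce
  then obtain a' b' c' d' where R: "similar_m s A (Mat2 a' b' c' d')"
    "a' - a \<in> jacobson" "d' - d \<in> jacobson" "b' \<notin> jacobson" "c' \<notin> jacobson"
    using similar_m_make_off_diagonal_notin_jacobson[OF c sJ] A by blast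
  obtain b'' where b'': "b' * b'' = 1" "b'' * b' = 1"
    using R(4) local_ring_is_unit_r_iff[OF L] unfolding is_unit_r_def by blast
  define v w where "v = b' * c'" and "w = b' * d' * b''"
  have S: "similar_m s A (Mat2 a' 1 v w)"
    unfolding v_def w_def using similar_m_trans[OF c R(1) similar_m_upper_right_one[OF b'']] .
  have v: "is_unit_r v"
    unfolding v_def using R(4,5) is_unit_r_mult local_ring_is_unit_r_iff[OF L] by blast
  have w: "w - b' * e * b'' \<in> jacobson" if "d - e \<in> jacobson" for e
    using local_ring_jacobson_conj[OF L b'' jacobson_diff_trans[OF R(3) that]]
    unfolding w_def by (simp add: algebra_simps)
  from diag show ?thesis
  proof
    assume "a \<in> jacobson \<and> d - 1 \<in> jacobson"
    then show ?thesis
      using S v w[of 1] b''(1) jacobson_iff_of_diff[OF R(2)] by auto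
  next
    assume "d \<in> jacobson \<and> a - 1 \<in> jacobson"
    then show ?thesis
      using S v w[of 0] jacobson_diff_trans[OF R(2)] by auto
  qed
qed

end
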